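(* Let $n<\omega$, let $L\in\mathbf{M}_n$ and let $P$ be its dual $pm$-space. Then every order component of $P$ is a closed subset of $P$.
   Context: $\mathbf{M}_n$ is the variety of regular pseudocomplemented de Morgan algebras of range $n$: algebras $(L;\wedge,\vee,{}^\ast,{}^\prime,0,1)$ with bounded distributive lattice reduct, pseudocomplement ${}^\ast$, de Morgan involution ${}^\prime$, satisfying $x\wedge x^{\prime\ast\prime}\le y\vee y^\ast$ (regularity) and $(x\wedge x^{\prime\ast})^{n(\prime\ast)}=(x\wedge x^{\prime\ast})^{(n+1)(\prime\ast)}$, where $x^{0(\prime\ast)}=x$, $x^{(k+1)(\prime\ast)}=((x^{k(\prime\ast)})')^\ast$. The dual $pm$-space is the Priestley space $(P;\tau,\le)$ of prime ideals with the involution $\zeta(I)=\{a:a'\notin I\}$. An order component of $P$ is a maximal subset any two elements of which are joined by a finite path in the comparability graph of $(P;\le)$. *)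

theory Defs
  imports "HOL-Analysis.Analysis"
begin

unbundle lattice_syntax

text \<open>An algebra (L; meet, join, pc, dm, bot, top): the lattice reduct is the carrier type
  'a with its bounded distributive lattice structure; pc is the pseudocomplement (x^*),
  dm is the de Morgan involution (x').\<close>

definition is_pseudocomplement :: "('a::{bounded_lattice,distrib_lattice} \<Rightarrow> 'a) \<Rightarrow> bool" where
  "is_pseudocomplement pc \<longleftrightarrow> (\<forall>x y. x \<sqinter> y = bot \<longleftrightarrow> y \<le> pc x)"

definition is_de_morgan_involution :: "('a::{bounded_lattice,distrib_lattice} \<Rightarrow> 'a) \<Rightarrow> bool" where
  "is_de_morgan_involution dm \<longleftrightarrow>
     (\<forall>x. dm (dm x) = x) \<and> (\<forall>x y. dm (x \<squnion> y) = dm x \<sqinter> dm y) \<and> dm bot = top"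

definition iter_dmpc :: "('a \<Rightarrow> 'a) \<Rightarrow> ('a \<Rightarrow> 'a) \<Rightarrow> nat \<Rightarrow> 'a \<Rightarrow> 'a" where
  "iter_dmpc pc dm k = (\<lambda>x. pc (dm x)) ^^ k"

definition in_M :: "nat \<Rightarrow> ('a::{bounded_lattice,distrib_lattice} \<Rightarrow> 'a) \<Rightarrow> ('a \<Rightarrow> 'a) \<Rightarrow> bool" where
  "in_M n pc dm \<longleftrightarrow> is_pseudocomplement pc \<and> is_de_morgan_involution dm
     \<and> (\<forall>x y. x \<sqinter> dm (pc (dm x)) \<le> y \<squnion> pc y)
     \<and> (\<forall>x. iter_dmpc pc dm n (x \<sqinter> pc (dm x)) = iter_dmpc pc dm (Suc n) (x \<sqinter> pc (dm x)))"

definition lattice_ideal :: "'a::{bounded_lattice,distrib_lattice} set \<Rightarrow> bool" where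
  "lattice_ideal I \<longleftrightarrow> bot \<in> I \<and> (\<forall>a\<in>I. \<forall>b. b \<le> a \<longrightarrow> b \<in> I) \<and> (\<forall>a\<in>I. \<forall>b\<in>I. a \<squnion> b \<in> I)"

definition prime_ideal :: "'a::{bounded_lattice,distrib_lattice} set \<Rightarrow> bool" where
  "prime_ideal I \<longleftrightarrow> lattice_ideal I \<and> top \<notin> I \<and> (\<forall>a b. a \<sqinter> b \<in> I \<longrightarrow> a \<in> I \<or> b \<in> I)"

definition prime_spectrum :: "'a::{bounded_lattice,distrib_lattice} set set" where
  "prime_spectrum = {I. prime_ideal I}"

definition priestley_subbasis :: "'a::{bounded_lattice,distrib_lattice} set set set" where
  "priestley_subbasis = (\<Union>a. {{I \<in> prime_spectrum. a \<notin> I}, {I \<in> prime_spectrum. a \<in> I}})"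

definition priestley_topology :: "'a::{bounded_lattice,distrib_lattice} set topology" where
  "priestley_topology = topology_generated_by priestley_subbasis"

definition pm_zeta :: "('a \<Rightarrow> 'a) \<Rightarrow> 'a set \<Rightarrow> 'a set" where
  "pm_zeta dm I = {a. dm a \<notin> I}"

definition comparable_in :: "'a set set \<Rightarrow> 'a set \<Rightarrow> 'a set \<Rightarrow> bool" where
  "comparable_in P I J \<longleftrightarrow> I \<in> P \<and> J \<in> P \<and> (I \<subseteq> J \<or> J \<subseteq> I)"

definition path_connected_in :: "'a set set \<Rightarrow> 'a set \<Rightarrow> 'a set \<Rightarrow> bool" where
  "path_connected_in P I J \<longleftrightarrow> (comparable_in P)\<^sup>*\<^sup>* I J"

definition pairwise_joined :: "'a set set \<Rightarrow> 'a set set \<Rightarrow> bool" where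
  "pairwise_joined P C \<longleftrightarrow> C \<subseteq> P \<and> (\<forall>I\<in>C. \<forall>J\<in>C. path_connected_in P I J)"

definition order_component :: "'a set set \<Rightarrow> 'a set set \<Rightarrow> bool" where
  "order_component P C \<longleftrightarrow> pairwise_joined P C \<and> (\<forall>D. pairwise_joined P D \<and> C \<subseteq> D \<longrightarrow> D = C)"

end

theory Submission
  imports Defs
begin

text \<open>Write f x = x'^* and \<zeta> for the involution of the dual space. By the prime ideal
  theorem, the primes lying above \<zeta>(J) for some prime J containing an ideal G are exactly the
  primes containing f[G]. Since two comparability steps can always be routed through \<zeta>, the order
  component of a prime I is the union of the increasing sets T_{2j}, where
  T_k = {K. f^k[I] \<subseteq> K} is closed. For k \<ge> n the range identity gives
  f^k x \<sqinter> f^{k+1} x \<le> f^{k+d} x, hence T_{k+d} \<subseteq> T_k \<union> T_{k+1}. So the component is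
  T_{2n}, or T_{2n} \<union> T_{2n+1} as soon as it meets T_{2n+1}, whose elements are pairwise joined
  through T_{2n}.\<close>

lemma lattice_ideal_bot: "lattice_ideal I \<Longrightarrow> bot \<in> I"
  unfolding lattice_ideal_def by blast

lemma lattice_ideal_down: "lattice_ideal I \<Longrightarrow> a \<in> I \<Longrightarrow> b \<le> a \<Longrightarrow> b \<in> I"
  unfolding lattice_ideal_def by blast

lemma lattice_ideal_sup: "lattice_ideal I \<Longrightarrow> a \<in> I \<Longrightarrow> b \<in> I \<Longrightarrow> a \<squnion> b \<in> I"
  unfolding lattice_ideal_def by blast

lemma prime_ideal_inf_notin: "prime_ideal I \<Longrightarrow> a \<notin> I \<Longrightarrow> b \<notin> I \<Longrightarrow> a \<sqinter> b \<notin> I"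
  unfolding prime_ideal_def by blast

lemma lattice_ideal_downset_directed:
  fixes S :: "'a::{bounded_lattice,distrib_lattice} set"
  assumes "S \<noteq> {}" and directed: "\<And>a b. a \<in> S \<Longrightarrow> b \<in> S \<Longrightarrow> \<exists>c\<in>S. a \<squnion> b \<le> c"
  shows "lattice_ideal {y. \<exists>s\<in>S. y \<le> s}"
  unfolding lattice_ideal_def
proof (intro conjI ballI allI impI)
  show "bot \<in> {y. \<exists>s\<in>S. y \<le> s}" using assms(1) by auto
next
  fix a b assume "a \<in> {y. \<exists>s\<in>S. y \<le> s}" "b \<le> a"
  then show "b \<in> {y. \<exists>s\<in>S. y \<le> s}" using order_trans by blast
next
  fix a b assume "a \<in> {y. \<exists>s\<in>S. y \<le> s}" "b \<in> {y. \<exists>s\<in>S. y \<le> s}"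
  then obtain s t where st: "s \<in> S" "t \<in> S" "a \<le> s" "b \<le> t" by blast
  then obtain c where "c \<in> S" "s \<squnion> t \<le> c" using directed by blast
  moreover from st(3,4) have "a \<squnion> b \<le> s \<squnion> t" by (rule sup_mono)
  ultimately show "a \<squnion> b \<in> {y. \<exists>s\<in>S. y \<le> s}" using order_trans by blast
qed

lemma lattice_ideal_Union_chain:
  assumes "C \<noteq> {}" and "subset.chain {M. lattice_ideal M} C"
  shows "lattice_ideal (\<Union>C)"
proof -
  have ideals: "\<And>M. M \<in> C \<Longrightarrow> lattice_ideal M"
    and chain: "\<And>X Y. X \<in> C \<Longrightarrow> Y \<in> C \<Longrightarrow> X \<subseteq> Y \<or> Y \<subseteq> X"
    using assms(2) by (auto simp: subset.chain_def)
  have "{y. \<exists>s\<in>\<Union>C. y \<le> s} = \<Union>C"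
    using ideals lattice_ideal_down by blast
  moreover have "lattice_ideal {y. \<exists>s\<in>\<Union>C. y \<le> s}"
  proof (rule lattice_ideal_downset_directed)
    show "\<Union>C \<noteq> {}" using assms(1) ideals lattice_ideal_bot by blast
    fix a b assume "a \<in> \<Union>C" "b \<in> \<Union>C"
    then obtain X Y where "X \<in> C" "Y \<in> C" "a \<in> X" "b \<in> Y" by blast
    then have "a \<squnion> b \<in> \<Union>C"
      using chain[of X Y] ideals lattice_ideal_sup by (metis UnionI subsetD)
    then show "\<exists>c\<in>\<Union>C. a \<squnion> b \<le> c" by blast
  qed
  ultimately show ?thesis by metis
qed

lemma maximal_proper_ideal_prime:
  fixes M :: "'a::{bounded_lattice,distrib_lattice} set"
  assumes M: "lattice_ideal M" "top \<notin> M"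
    and maximal: "\<And>X. lattice_ideal X \<Longrightarrow> top \<notin> X \<Longrightarrow> M \<subseteq> X \<Longrightarrow> X = M"
  shows "prime_ideal M"
proof -
  have top_below: "\<exists>m\<in>M. top \<le> m \<squnion> a" if "a \<notin> M" for a
  proof (rule ccontr)
    let ?X = "{y. \<exists>s\<in>(\<lambda>m. m \<squnion> a) ` M. y \<le> s}"
    assume "\<not> (\<exists>m\<in>M. top \<le> m \<squnion> a)"
    then have "top \<notin> ?X" by auto
    moreover have "lattice_ideal ?X"
    proof (rule lattice_ideal_downset_directed)
      show "(\<lambda>m. m \<squnion> a) ` M \<noteq> {}" using lattice_ideal_bot[OF M(1)] by blast
      fix u v assume "u \<in> (\<lambda>m. m \<squnion> a) ` M" "v \<in> (\<lambda>m. m \<squnion> a) ` M"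
      then obtain m1 m2 where "m1 \<in> M" "m2 \<in> M" "u = m1 \<squnion> a" "v = m2 \<squnion> a" by blast
      moreover have "m1 \<squnion> a \<squnion> (m2 \<squnion> a) = (m1 \<squnion> m2) \<squnion> a" by (simp add: sup_aci)
      ultimately show "\<exists>c\<in>(\<lambda>m. m \<squnion> a) ` M. u \<squnion> v \<le> c"
        using lattice_ideal_sup[OF M(1)] by fastforce
    qed
    moreover have "M \<subseteq> ?X" using sup_ge1 by blast
    ultimately have "?X = M" using maximal[of ?X] by simp
    moreover have "a \<in> ?X" using lattice_ideal_bot[OF M(1)] sup_ge2 by blast
    ultimately show False using that by blast
  qed
  have "a \<in> M \<or> b \<in> M" if ab: "a \<sqinter> b \<in> M" for a b
  proof (rule ccontr)
    assume "\<not> (a \<in> M \<or> b \<in> M)"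
    then obtain m1 m2 where m: "m1 \<in> M" "m2 \<in> M" "top \<le> m1 \<squnion> a" "top \<le> m2 \<squnion> b"
      using top_below by blast
    then have "top \<le> (m1 \<squnion> a) \<sqinter> (m2 \<squnion> b)" by simp
    also have "\<dots> \<le> (m1 \<squnion> m2 \<squnion> a) \<sqinter> (m1 \<squnion> m2 \<squnion> b)"
      by (intro inf_mono sup_mono) simp_all
    also have "\<dots> = (m1 \<squnion> m2) \<squnion> (a \<sqinter> b)" by (rule sup_inf_distrib1[symmetric])
    finally have "top \<in> M"
      using m ab lattice_ideal_sup[OF M(1)] lattice_ideal_down[OF M(1)] by metis
    then show False using M(2) by blast
  qed
  then show ?thesis using M unfolding prime_ideal_def by blast
qed

theorem prime_ideal_extension:
  fixes H :: "'a::{bounded_lattice,distrib_lattice} set"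
  assumes "lattice_ideal H" and "top \<notin> H"
  obtains J where "prime_ideal J" and "H \<subseteq> J"
proof -
  let ?A = "{M. lattice_ideal M \<and> top \<notin> M \<and> H \<subseteq> M}"
  have "\<exists>M\<in>?A. \<forall>X\<in>?A. M \<subseteq> X \<longrightarrow> X = M"
  proof (rule subset_Zorn_nonempty)
    show "?A \<noteq> {}" using assms by blast
    fix C assume C: "C \<noteq> {}" "subset.chain ?A C"
    then have "C \<subseteq> ?A" and "subset.chain {M. lattice_ideal M} C"
      by (auto simp: subset.chain_def)
    then show "\<Union>C \<in> ?A"
      using lattice_ideal_Union_chain[OF C(1)] C(1) by blast
  qed
  then obtain M where M: "lattice_ideal M" "top \<notin> M" "H \<subseteq> M"
    and maximal: "\<forall>X\<in>?A. M \<subseteq> X \<longrightarrow> X = M"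
    by blast
  have "prime_ideal M"
    by (rule maximal_proper_ideal_prime) (use M maximal in auto)
  then show ?thesis using M(3) by (rule that)
qed

lemma symp_rtranclp_comparable_in: "symp (comparable_in P)\<^sup>*\<^sup>*"
  by (rule symp_rtranclp) (auto simp: symp_def comparable_in_def)

lemma order_component_eq_reachable:
  assumes C: "order_component P C" and "I \<in> C"
  shows "C = {K. (comparable_in P)\<^sup>*\<^sup>* I K}"
proof -
  let ?D = "{K. (comparable_in P)\<^sup>*\<^sup>* I K}"
  have CP: "C \<subseteq> P" and joined: "\<And>J K. J \<in> C \<Longrightarrow> K \<in> C \<Longrightarrow> (comparable_in P)\<^sup>*\<^sup>* J K"
    and maximal: "\<And>D. pairwise_joined P D \<Longrightarrow> C \<subseteq> D \<Longrightarrow> D = C"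
    using C unfolding order_component_def pairwise_joined_def path_connected_in_def by blast+
  have "?D \<subseteq> P"
  proof
    fix K assume "K \<in> ?D"
    then have "(comparable_in P)\<^sup>*\<^sup>* I K" by simp
    then show "K \<in> P"
      by (induction rule: rtranclp_induct) (use CP \<open>I \<in> C\<close> in \<open>auto simp: comparable_in_def\<close>)
  qed
  moreover have "C \<subseteq> ?D" using joined \<open>I \<in> C\<close> by blast
  moreover have "(comparable_in P)\<^sup>*\<^sup>* J K" if "J \<in> ?D" "K \<in> ?D" for J K
    using that symp_rtranclp_comparable_in by (metis mem_Collect_eq rtranclp_trans sympD)
  ultimately have "pairwise_joined P ?D" and "C \<subseteq> ?D"
    unfolding pairwise_joined_def path_connected_in_def by blast+
  then show ?thesis using maximal by blast
qed

lemma topspace_priestley_topology: "topspace priestley_topology = prime_spectrum"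
proof -
  have "\<Union>priestley_subbasis = (prime_spectrum :: 'a set set)"
    unfolding priestley_subbasis_def prime_spectrum_def prime_ideal_def by auto
  then show ?thesis unfolding priestley_topology_def by simp
qed

lemma closedin_priestley_mem: "closedin priestley_topology {K \<in> prime_spectrum. a \<in> K}"
proof -
  have "openin priestley_topology {K \<in> prime_spectrum. a \<notin> K}"
    unfolding priestley_topology_def priestley_subbasis_def
    by (rule topology_generated_by_Basis) blast
  moreover have "{K \<in> prime_spectrum. a \<in> K} = prime_spectrum - {K \<in> prime_spectrum. a \<notin> K}"
    by blast
  ultimately show ?thesis
    using closedin_diff[OF closedin_topspace] topspace_priestley_topology by metis
qed

locale pm_algebra =
  fixes pc dm :: "'a::{bounded_lattice,distrib_lattice} \<Rightarrow> 'a"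
  assumes pseudocomplement: "is_pseudocomplement pc"
    and de_morgan: "is_de_morgan_involution dm"
begin

lemma inf_eq_bot_iff_le_pc: "x \<sqinter> y = bot \<longleftrightarrow> y \<le> pc x"
  using pseudocomplement unfolding is_pseudocomplement_def by blast

lemma inf_pc: "x \<sqinter> pc x = bot"
  using inf_eq_bot_iff_le_pc by blast

lemma pc_antimono: "x \<le> y \<Longrightarrow> pc y \<le> pc x"
  by (metis inf_eq_bot_iff_le_pc inf_pc inf.absorb_iff1 inf_assoc)

lemma pc_sup: "pc (x \<squnion> y) = pc x \<sqinter> pc y"
proof (rule antisym)
  show "pc (x \<squnion> y) \<le> pc x \<sqinter> pc y" by (simp add: pc_antimono)
  have "x \<sqinter> (pc x \<sqinter> pc y) = bot" by (metis inf_pc inf.assoc inf_bot_left)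
  moreover have "y \<sqinter> (pc x \<sqinter> pc y) = bot" by (metis inf_pc inf.left_commute inf_bot_right)
  ultimately have "(x \<squnion> y) \<sqinter> (pc x \<sqinter> pc y) = bot" by (simp add: inf_sup_distrib2)
  then show "pc x \<sqinter> pc y \<le> pc (x \<squnion> y)" by (simp add: inf_eq_bot_iff_le_pc)
qed

lemma dm_dm [simp]: "dm (dm x) = x"
  using de_morgan unfolding is_de_morgan_involution_def by blast

lemma dm_sup: "dm (x \<squnion> y) = dm x \<sqinter> dm y"
  using de_morgan unfolding is_de_morgan_involution_def by blast

lemma dm_inf: "dm (x \<sqinter> y) = dm x \<squnion> dm y"
  by (metis dm_dm dm_sup)

lemma dm_bot [simp]: "dm bot = top"
  using de_morgan unfolding is_de_morgan_involution_def by blast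

lemma dm_top [simp]: "dm top = bot"
  by (metis dm_dm dm_bot)

lemma dm_antimono: "x \<le> y \<Longrightarrow> dm y \<le> dm x"
  by (metis dm_sup inf.cobounded1 sup.absorb2)

definition dmpc :: "'a \<Rightarrow> 'a" where
  "dmpc x = pc (dm x)"

lemma iter_dmpc_eq: "iter_dmpc pc dm k = dmpc ^^ k"
  unfolding iter_dmpc_def dmpc_def[abs_def] ..

lemma dmpc_mono: "x \<le> y \<Longrightarrow> dmpc x \<le> dmpc y"
  unfolding dmpc_def by (intro pc_antimono dm_antimono)

lemma dmpc_inf: "dmpc (x \<sqinter> y) = dmpc x \<sqinter> dmpc y"
  unfolding dmpc_def by (simp add: dm_inf pc_sup)

lemma funpow_dmpc_mono: "x \<le> y \<Longrightarrow> (dmpc ^^ k) x \<le> (dmpc ^^ k) y"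
  by (induction k) (auto intro: dmpc_mono)

lemma funpow_dmpc_inf: "(dmpc ^^ k) (x \<sqinter> y) = (dmpc ^^ k) x \<sqinter> (dmpc ^^ k) y"
  by (induction k) (auto simp: dmpc_inf)

abbreviation \<zeta> :: "'a set \<Rightarrow> 'a set" where
  "\<zeta> \<equiv> pm_zeta dm"

lemma zeta_zeta [simp]: "\<zeta> (\<zeta> J) = J"
  unfolding pm_zeta_def by simp

lemma zeta_antimono: "J \<subseteq> K \<Longrightarrow> \<zeta> K \<subseteq> \<zeta> J"
  unfolding pm_zeta_def by auto

lemma prime_ideal_zeta:
  assumes "prime_ideal J"
  shows "prime_ideal (\<zeta> J)"
proof -
  have J: "lattice_ideal J" "top \<notin> J" "\<And>a b. a \<sqinter> b \<in> J \<Longrightarrow> a \<in> J \<or> b \<in> J"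
    using assms unfolding prime_ideal_def by auto
  show ?thesis
    unfolding prime_ideal_def lattice_ideal_def pm_zeta_def
  proof (intro conjI ballI allI impI)
    fix a b assume "a \<in> {a. dm a \<notin> J}" "b \<le> a"
    then show "b \<in> {a. dm a \<notin> J}" using dm_antimono lattice_ideal_down[OF J(1)] by blast
  qed (use J lattice_ideal_bot[OF J(1)] lattice_ideal_sup[OF J(1)] in \<open>auto simp: dm_sup dm_inf\<close>)
qed

lemma prime_above_zeta_below_iff:
  assumes G: "lattice_ideal G" and K: "prime_ideal K"
  shows "(\<exists>J. prime_ideal J \<and> G \<subseteq> J \<and> \<zeta> J \<subseteq> K) \<longleftrightarrow> dmpc ` G \<subseteq> K"
proof
  assume "\<exists>J. prime_ideal J \<and> G \<subseteq> J \<and> \<zeta> J \<subseteq> K"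
  then obtain J where J: "prime_ideal J" "G \<subseteq> J" "\<zeta> J \<subseteq> K" by blast
  have "dmpc x \<in> \<zeta> J" if "x \<in> G" for x
  proof -
    have "dm x \<notin> \<zeta> J" using J(2) that unfolding pm_zeta_def by auto
    moreover have "dm x \<sqinter> dmpc x \<in> \<zeta> J"
      using inf_pc[of "dm x"] lattice_ideal_bot prime_ideal_zeta[OF J(1)]
      unfolding dmpc_def prime_ideal_def by auto
    ultimately show ?thesis using prime_ideal_zeta[OF J(1)] unfolding prime_ideal_def by blast
  qed
  then show "dmpc ` G \<subseteq> K" using J(3) by blast
next
  \<comment> \<open>Any prime above the ideal generated by G and {dm a | a \<notin> K} will do; that ideal is
    proper because top \<le> g \<squnion> dm a forces a \<le> dmpc g.\<close>
  assume GK: "dmpc ` G \<subseteq> K"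
  let ?S = "{g \<squnion> dm a |g a. g \<in> G \<and> a \<notin> K}"
  let ?H = "{y. \<exists>s\<in>?S. y \<le> s}"
  have K_proper: "lattice_ideal K" "top \<notin> K" using K unfolding prime_ideal_def by auto
  have "lattice_ideal ?H"
  proof (rule lattice_ideal_downset_directed)
    show "?S \<noteq> {}" using lattice_ideal_bot[OF G] K_proper(2) by blast
    fix u v assume "u \<in> ?S" "v \<in> ?S"
    then obtain g1 a1 g2 a2 where ga: "g1 \<in> G" "g2 \<in> G" "a1 \<notin> K" "a2 \<notin> K"
      "u = g1 \<squnion> dm a1" "v = g2 \<squnion> dm a2" by blast
    have "u \<squnion> v \<le> (g1 \<squnion> g2) \<squnion> dm (a1 \<sqinter> a2)"
      unfolding ga(5,6) dm_inf by (simp add: le_supI1 le_supI2)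
    moreover have "g1 \<squnion> g2 \<in> G" "a1 \<sqinter> a2 \<notin> K"
      using lattice_ideal_sup[OF G] prime_ideal_inf_notin[OF K] ga by blast+
    ultimately show "\<exists>c\<in>?S. u \<squnion> v \<le> c" by blast
  qed
  moreover have "top \<notin> ?H"
  proof
    assume "top \<in> ?H"
    then obtain g a where ga: "g \<in> G" "a \<notin> K" "top \<le> g \<squnion> dm a" by blast
    then have "dm g \<sqinter> a = bot"
      using dm_antimono[OF ga(3)] by (simp add: dm_sup bot_unique)
    then have "a \<le> dmpc g" unfolding dmpc_def using inf_eq_bot_iff_le_pc by blast
    then show False using GK ga(1,2) lattice_ideal_down[OF K_proper(1)] by blast
  qed
  ultimately obtain J where J: "prime_ideal J" "?H \<subseteq> J" by (rule prime_ideal_extension)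
  have "G \<subseteq> ?H"
  proof
    fix g assume "g \<in> G"
    then have "g \<squnion> dm top \<in> ?S" using K_proper(2) by blast
    then show "g \<in> ?H" by fastforce
  qed
  moreover have "\<zeta> J \<subseteq> K"
  proof
    fix b assume "b \<in> \<zeta> J"
    moreover have "b \<notin> K \<Longrightarrow> bot \<squnion> dm b \<in> ?S" using lattice_ideal_bot[OF G] by blast
    ultimately show "b \<in> K" using J(2) unfolding pm_zeta_def by fastforce
  qed
  ultimately show "\<exists>J. prime_ideal J \<and> G \<subseteq> J \<and> \<zeta> J \<subseteq> K" using J by blast
qed

definition primes_above_iter :: "'a set \<Rightarrow> nat \<Rightarrow> 'a set set" where
  "primes_above_iter I k = {K. prime_ideal K \<and> (dmpc ^^ k) ` I \<subseteq> K}"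

definition zeta_successors :: "'a set set \<Rightarrow> 'a set set" where
  "zeta_successors S = {K. prime_ideal K \<and> (\<exists>J\<in>S. \<zeta> J \<subseteq> K)}"

lemma zeta_successors_primes_above_iter:
  assumes I: "lattice_ideal I"
  shows "zeta_successors (primes_above_iter I k) = primes_above_iter I (Suc k)"
proof -
  let ?G = "{y. \<exists>s\<in>(dmpc ^^ k) ` I. y \<le> s}"
  have G: "lattice_ideal ?G"
  proof (rule lattice_ideal_downset_directed)
    show "(dmpc ^^ k) ` I \<noteq> {}" using lattice_ideal_bot[OF I] by blast
    fix u v assume "u \<in> (dmpc ^^ k) ` I" "v \<in> (dmpc ^^ k) ` I"
    then obtain x y where "x \<in> I" "y \<in> I" "u = (dmpc ^^ k) x" "v = (dmpc ^^ k) y" by blast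
    moreover have "(dmpc ^^ k) x \<squnion> (dmpc ^^ k) y \<le> (dmpc ^^ k) (x \<squnion> y)"
      by (simp add: funpow_dmpc_mono)
    ultimately show "\<exists>c\<in>(dmpc ^^ k) ` I. u \<squnion> v \<le> c"
      using lattice_ideal_sup[OF I] by blast
  qed
  have layer_iff: "J \<in> primes_above_iter I k \<longleftrightarrow> prime_ideal J \<and> ?G \<subseteq> J" for J
  proof
    assume "J \<in> primes_above_iter I k"
    then have "prime_ideal J" "(dmpc ^^ k) ` I \<subseteq> J" unfolding primes_above_iter_def by auto
    then show "prime_ideal J \<and> ?G \<subseteq> J"
      using lattice_ideal_down[of J] unfolding prime_ideal_def by blast
  qed (auto simp: primes_above_iter_def)
  have image_iff: "dmpc ` ?G \<subseteq> K \<longleftrightarrow> (dmpc ^^ Suc k) ` I \<subseteq> K" if K: "lattice_ideal K" for K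
  proof
    assume "dmpc ` ?G \<subseteq> K"
    then show "(dmpc ^^ Suc k) ` I \<subseteq> K" by auto
  next
    assume I_K: "(dmpc ^^ Suc k) ` I \<subseteq> K"
    show "dmpc ` ?G \<subseteq> K"
    proof
      fix z assume "z \<in> dmpc ` ?G"
      then obtain x y where "x \<in> I" "y \<le> (dmpc ^^ k) x" "z = dmpc y" by blast
      then have "x \<in> I" "z \<le> (dmpc ^^ Suc k) x" by (simp_all add: dmpc_mono)
      then show "z \<in> K" using I_K lattice_ideal_down[OF K] by blast
    qed
  qed
  show ?thesis
  proof (rule set_eqI)
    fix K
    show "K \<in> zeta_successors (primes_above_iter I k) \<longleftrightarrow> K \<in> primes_above_iter I (Suc k)"
    proof (cases "prime_ideal K")
      case True
      have "K \<in> zeta_successors (primes_above_iter I k)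
            \<longleftrightarrow> (\<exists>J\<in>primes_above_iter I k. \<zeta> J \<subseteq> K)"
        unfolding zeta_successors_def using True by simp
      also have "\<dots> \<longleftrightarrow> (\<exists>J. prime_ideal J \<and> ?G \<subseteq> J \<and> \<zeta> J \<subseteq> K)"
        using layer_iff by blast
      also have "\<dots> \<longleftrightarrow> dmpc ` ?G \<subseteq> K" by (rule prime_above_zeta_below_iff[OF G True])
      also have "\<dots> \<longleftrightarrow> K \<in> primes_above_iter I (Suc k)"
        using image_iff[of K] True unfolding prime_ideal_def primes_above_iter_def by simp
      finally show ?thesis .
    qed (simp add: zeta_successors_def primes_above_iter_def)
  qed
qed

lemma subset_zeta_successors_twice:
  assumes "S \<subseteq> {K. prime_ideal K}"
  shows "S \<subseteq> zeta_successors (zeta_successors S)"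
proof
  fix K assume "K \<in> S"
  with assms have K: "prime_ideal K" by blast
  with \<open>K \<in> S\<close> have "\<zeta> K \<in> zeta_successors S"
    unfolding zeta_successors_def using prime_ideal_zeta by blast
  then show "K \<in> zeta_successors (zeta_successors S)"
    unfolding zeta_successors_def using K zeta_zeta by blast
qed

lemma primes_above_iter_subset_add_even:
  assumes I: "lattice_ideal I"
  shows "primes_above_iter I k \<subseteq> primes_above_iter I (k + 2 * d)"
proof (induction d)
  case (Suc d)
  have "primes_above_iter I (k + 2 * d)
        \<subseteq> zeta_successors (zeta_successors (primes_above_iter I (k + 2 * d)))"
    by (rule subset_zeta_successors_twice) (auto simp: primes_above_iter_def)
  then show ?case using Suc zeta_successors_primes_above_iter[OF I] by simp
qed simp

lemma closedin_primes_above_iter: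
  assumes "I \<noteq> {}"
  shows "closedin priestley_topology (primes_above_iter I k)"
proof -
  have "primes_above_iter I k = (\<Inter>x\<in>I. {K \<in> prime_spectrum. (dmpc ^^ k) x \<in> K})"
    using assms unfolding primes_above_iter_def prime_spectrum_def by auto
  then show ?thesis using assms closedin_priestley_mem by (auto intro!: closedin_INT)
qed

lemma funpow_dmpc_range_step:
  assumes "in_M n pc dm" and "n \<le> m"
  shows "(dmpc ^^ m) x \<sqinter> (dmpc ^^ Suc m) x \<le> (dmpc ^^ Suc (Suc m)) x"
proof -
  have "(dmpc ^^ n) (x \<sqinter> dmpc x) = (dmpc ^^ Suc n) (x \<sqinter> dmpc x)"
    using assms(1) unfolding in_M_def iter_dmpc_eq dmpc_def by blast
  then have "(dmpc ^^ n) x \<sqinter> (dmpc ^^ Suc n) x = (dmpc ^^ Suc n) x \<sqinter> (dmpc ^^ Suc (Suc n)) x"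
    by (simp add: funpow_dmpc_inf dmpc_inf funpow_Suc_right del: funpow.simps)
  then have "(dmpc ^^ n) x \<sqinter> (dmpc ^^ Suc n) x \<le> (dmpc ^^ Suc (Suc n)) x"
    by (metis inf.cobounded2)
  then have "(dmpc ^^ d) ((dmpc ^^ n) x \<sqinter> (dmpc ^^ Suc n) x)
             \<le> (dmpc ^^ d) ((dmpc ^^ Suc (Suc n)) x)" for d
    by (rule funpow_dmpc_mono)
  moreover obtain d where "m = d + n" using assms(2) by (metis le_add_diff_inverse2)
  moreover have "(dmpc ^^ a) ((dmpc ^^ b) x) = (dmpc ^^ (a + b)) x" for a b
    by (simp add: funpow_add)
  ultimately show ?thesis by (simp add: funpow_dmpc_inf del: funpow.simps)
qed

lemma funpow_dmpc_range:
  assumes "in_M n pc dm" and "n \<le> k"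
  shows "(dmpc ^^ k) x \<sqinter> (dmpc ^^ Suc k) x \<le> (dmpc ^^ (k + d)) x"
proof -
  have "(dmpc ^^ k) x \<sqinter> (dmpc ^^ Suc k) x \<le> (dmpc ^^ (k + d)) x \<sqinter> (dmpc ^^ Suc (k + d)) x"
  proof (induction d)
    case (Suc d)
    also have "(dmpc ^^ (k + d)) x \<sqinter> (dmpc ^^ Suc (k + d)) x \<le> (dmpc ^^ Suc (Suc (k + d))) x"
      using funpow_dmpc_range_step assms by simp
    finally show ?case using Suc by simp
  qed simp
  then show ?thesis by simp
qed

lemma primes_above_iter_add_subset:
  assumes "in_M n pc dm" and "n \<le> k" and I: "lattice_ideal I"
  shows "primes_above_iter I (k + d) \<subseteq> primes_above_iter I k \<union> primes_above_iter I (Suc k)"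
proof
  fix K assume K: "K \<in> primes_above_iter I (k + d)"
  then have K_prime: "prime_ideal K" unfolding primes_above_iter_def by blast
  show "K \<in> primes_above_iter I k \<union> primes_above_iter I (Suc k)"
  proof (rule ccontr)
    assume "K \<notin> primes_above_iter I k \<union> primes_above_iter I (Suc k)"
    then obtain x y where "x \<in> I" "y \<in> I" "(dmpc ^^ k) x \<notin> K" "(dmpc ^^ Suc k) y \<notin> K"
      using K_prime unfolding primes_above_iter_def by auto
    moreover have "v \<notin> K" if "u \<le> v" "u \<notin> K" for u v
      using that lattice_ideal_down K_prime unfolding prime_ideal_def by blast
    ultimately have "x \<squnion> y \<in> I" "(dmpc ^^ k) (x \<squnion> y) \<notin> K" "(dmpc ^^ Suc k) (x \<squnion> y) \<notin> K"
      using lattice_ideal_sup[OF I] funpow_dmpc_mono[of _ "x \<squnion> y"] by (meson sup_ge1 sup_ge2)+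
    then have "(dmpc ^^ k) (x \<squnion> y) \<sqinter> (dmpc ^^ Suc k) (x \<squnion> y) \<notin> K"
      and "(dmpc ^^ (k + d)) (x \<squnion> y) \<in> K"
      using prime_ideal_inf_notin[OF K_prime] K unfolding primes_above_iter_def by blast+
    then show False
      using funpow_dmpc_range[OF assms(1,2)] lattice_ideal_down K_prime
      unfolding prime_ideal_def by blast
  qed
qed

abbreviation comparable :: "'a set \<Rightarrow> 'a set \<Rightarrow> bool" where
  "comparable \<equiv> comparable_in prime_spectrum"

lemma primes_above_iter_even_reachable:
  assumes I: "prime_ideal I" and "K \<in> primes_above_iter I (2 * j)"
  shows "comparable\<^sup>*\<^sup>* I K"
  using assms(2)
proof (induction j arbitrary: K)
  case 0
  then show ?case
    using I by (auto simp: primes_above_iter_def comparable_in_def prime_spectrum_def)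
next
  case (Suc j)
  have "lattice_ideal I" using I unfolding prime_ideal_def by blast
  then have "primes_above_iter I (2 * Suc j)
             = zeta_successors (zeta_successors (primes_above_iter I (2 * j)))"
    by (simp add: zeta_successors_primes_above_iter)
  then obtain J K0 where "prime_ideal K" "prime_ideal J" "\<zeta> J \<subseteq> K"
    and K0: "K0 \<in> primes_above_iter I (2 * j)" "\<zeta> K0 \<subseteq> J"
    using Suc.prems unfolding zeta_successors_def by blast
  moreover have "\<zeta> J \<subseteq> K0" using zeta_antimono[OF K0(2)] by simp
  moreover have "prime_ideal K0" using K0(1) unfolding primes_above_iter_def by blast
  ultimately have "comparable K0 (\<zeta> J)" "comparable (\<zeta> J) K"
    using prime_ideal_zeta unfolding comparable_in_def prime_spectrum_def by auto
  with Suc.IH[OF K0(1)] show ?case by (meson rtranclp.rtrancl_into_rtrancl)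
qed

lemma reachable_in_primes_above_iter_even:
  assumes I: "prime_ideal I" and "comparable\<^sup>*\<^sup>* I K"
  shows "\<exists>j. K \<in> primes_above_iter I (2 * j)"
  using assms(2)
proof (induction rule: rtranclp_induct)
  case base
  have "I \<in> primes_above_iter I (2 * 0)" using I by (simp add: primes_above_iter_def)
  then show ?case by blast
next
  case (step K K')
  then obtain j where j: "K \<in> primes_above_iter I (2 * j)" by blast
  have K': "prime_ideal K'" using step(2) unfolding comparable_in_def prime_spectrum_def by blast
  consider "K \<subseteq> K'" | "K' \<subseteq> K" using step(2) unfolding comparable_in_def by blast
  then show ?case
  proof cases
    case 1
    then have "K' \<in> primes_above_iter I (2 * j)" using j K' unfolding primes_above_iter_def by auto
    then show ?thesis by blast
  next
    case 2
    have "lattice_ideal I" using I unfolding prime_ideal_def by blast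
    moreover have "\<zeta> K' \<in> zeta_successors (primes_above_iter I (2 * j))"
      unfolding zeta_successors_def using j 2 K' prime_ideal_zeta zeta_antimono by blast
    then have "K' \<in> zeta_successors (zeta_successors (primes_above_iter I (2 * j)))"
      unfolding zeta_successors_def using K' zeta_zeta[of K'] by blast
    ultimately have "K' \<in> primes_above_iter I (2 * Suc j)"
      by (simp add: zeta_successors_primes_above_iter)
    then show ?thesis by blast
  qed
qed

lemma rtranclp_comparable_zeta: "comparable\<^sup>*\<^sup>* J K \<Longrightarrow> comparable\<^sup>*\<^sup>* (\<zeta> J) (\<zeta> K)"
proof (induction rule: rtranclp_induct)
  case (step K K')
  then have "comparable (\<zeta> K) (\<zeta> K')"
    using prime_ideal_zeta zeta_antimono unfolding comparable_in_def prime_spectrum_def by auto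
  with step.IH show ?case by (rule rtranclp.rtrancl_into_rtrancl)
qed simp

lemma zeta_successors_reachable:
  assumes "S \<subseteq> {J. prime_ideal J}" and "\<And>J J'. J \<in> S \<Longrightarrow> J' \<in> S \<Longrightarrow> comparable\<^sup>*\<^sup>* J J'"
    and "K \<in> zeta_successors S" and "K' \<in> zeta_successors S"
  shows "comparable\<^sup>*\<^sup>* K K'"
proof -
  obtain J J' where J: "J \<in> S" "\<zeta> J \<subseteq> K" "prime_ideal K"
    and J': "J' \<in> S" "\<zeta> J' \<subseteq> K'" "prime_ideal K'"
    using assms(3,4) unfolding zeta_successors_def by blast
  then have "comparable K (\<zeta> J)" "comparable (\<zeta> J') K'"
    using assms(1) prime_ideal_zeta unfolding comparable_in_def prime_spectrum_def by auto
  moreover have "comparable\<^sup>*\<^sup>* (\<zeta> J) (\<zeta> J')"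
    using assms(2)[OF J(1) J'(1)] by (rule rtranclp_comparable_zeta)
  ultimately show ?thesis by (meson r_into_rtranclp rtranclp_trans)
qed

lemma reachable_subset_primes_above_iter:
  assumes "in_M n pc dm" and I: "prime_ideal I" and "comparable\<^sup>*\<^sup>* I K"
  shows "K \<in> primes_above_iter I (2 * n) \<union> primes_above_iter I (Suc (2 * n))"
proof -
  have I_ideal: "lattice_ideal I" using I unfolding prime_ideal_def by blast
  obtain j where j: "K \<in> primes_above_iter I (2 * j)"
    using reachable_in_primes_above_iter_even[OF assms(2,3)] by blast
  show ?thesis
  proof (cases "j \<le> n")
    case True
    then have "2 * j + 2 * (n - j) = 2 * n" by simp
    then show ?thesis
      using j primes_above_iter_subset_add_even[OF I_ideal, of "2 * j" "n - j"] by auto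
  next
    case False
    then have "2 * j = 2 * n + (2 * j - 2 * n)" by simp
    then show ?thesis
      using j primes_above_iter_add_subset[OF assms(1) _ I_ideal, of "2 * n" "2 * j - 2 * n"]
      by auto
  qed
qed

lemma closedin_reachable:
  assumes M: "in_M n pc dm" and I: "prime_ideal I"
  shows "closedin priestley_topology {K. comparable\<^sup>*\<^sup>* I K}"
proof -
  let ?C = "{K. comparable\<^sup>*\<^sup>* I K}"
  let ?E = "primes_above_iter I (2 * n)" and ?O = "primes_above_iter I (Suc (2 * n))"
  have I_ideal: "lattice_ideal I" using I unfolding prime_ideal_def by blast
  have C_sub: "?C \<subseteq> ?E \<union> ?O" using reachable_subset_primes_above_iter[OF M I] by blast
  have E_sub: "?E \<subseteq> ?C" using primes_above_iter_even_reachable[OF I] by blast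
  have O_sub: "?O \<subseteq> ?C" if "K \<in> ?O \<inter> ?C" for K
  proof
    fix K' assume "K' \<in> ?O"
    have "?E \<subseteq> {J. prime_ideal J}" by (auto simp: primes_above_iter_def)
    moreover have "comparable\<^sup>*\<^sup>* J J'" if "J \<in> ?E" "J' \<in> ?E" for J J'
      using that E_sub symp_rtranclp_comparable_in
      by (metis mem_Collect_eq rtranclp_trans subsetD sympD)
    ultimately have "comparable\<^sup>*\<^sup>* K K'"
      using zeta_successors_reachable \<open>K \<in> ?O \<inter> ?C\<close> \<open>K' \<in> ?O\<close>
      by (simp add: zeta_successors_primes_above_iter[OF I_ideal])
    with that show "K' \<in> ?C" by auto
  qed
  have "?C = ?E \<or> ?C = ?E \<union> ?O" using C_sub E_sub O_sub by blast
  moreover have "I \<noteq> {}" using lattice_ideal_bot[OF I_ideal] by blast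
  then have "closedin priestley_topology ?E" "closedin priestley_topology ?O"
    by (simp_all add: closedin_primes_above_iter)
  ultimately show ?thesis by (metis closedin_Un)
qed

end

theorem theorem4p1:
  fixes n :: nat
    and pc dm :: "'a::{bounded_lattice,distrib_lattice} \<Rightarrow> 'a"
    and C :: "'a set set"
  assumes "in_M n pc dm"
    and "order_component prime_spectrum C"
  shows "closedin priestley_topology C"
proof (cases "C = {}")
  case False
  then obtain I where "I \<in> C" by blast
  have "pm_algebra pc dm" using assms(1) unfolding in_M_def pm_algebra_def by blast
  moreover have "prime_ideal I"
    using \<open>I \<in> C\<close> assms(2)
    unfolding order_component_def pairwise_joined_def prime_spectrum_def by blast
  moreover have "C = {K. (comparable_in prime_spectrum)\<^sup>*\<^sup>* I K}"
    using assms(2) \<open>I \<in> C\<close> by (rule order_component_eq_reachable)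
  ultimately show ?thesis using assms(1) pm_algebra.closedin_reachable by metis
qed simp

end
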